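(* Let $X,Y$ be Banach lattices and $S\colon X\to Y$ convex. Then the following are equivalent: (i) $S$ is continuous; (ii) for every $x\in X$ there exists $r>0$ such that $\|S_x\|_r<\infty$.
   Context: An operator $S\colon X\to Y$ is convex if $S(\lambda x+(1-\lambda)y)\le\lambda Sx+(1-\lambda)Sy$ for all $x,y\in X$, $\lambda\in[0,1]$. $S_xy:=S(x+y)-Sx$ for $x,y\in X$, and $\|T\|_r:=\sup_{\|y\|\le r}\|Ty\|$. *)

theory Defs
  imports "HOL-Analysis.Analysis"
begin

text \<open>Banach lattice: a real Banach space which is a vector lattice (Riesz space:
  lattice order compatible with addition and positive scalar multiplication) and whose
  norm is a lattice norm, i.e. |x| \<le> |y| implies norm x \<le> norm y, where |x| = x \<squnion> -x.\<close>
class banach_lattice = banach + lattice + ordered_real_vector +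
  assumes lattice_norm: "sup x (- x) \<le> sup y (- y) \<Longrightarrow> norm x \<le> norm y"

definition convex_op :: "('a::real_vector \<Rightarrow> 'b::ordered_real_vector) \<Rightarrow> bool" where
  "convex_op S \<longleftrightarrow> (\<forall>x y. \<forall>l::real. 0 \<le> l \<and> l \<le> 1 \<longrightarrow>
      S (l *\<^sub>R x + (1 - l) *\<^sub>R y) \<le> l *\<^sub>R S x + (1 - l) *\<^sub>R S y)"

definition shift_op :: "('a::real_vector \<Rightarrow> 'b::real_vector) \<Rightarrow> 'a \<Rightarrow> 'a \<Rightarrow> 'b" where
  "shift_op S x = (\<lambda>y. S (x + y) - S x)"

definition rnorm :: "('a::real_normed_vector \<Rightarrow> 'b::real_normed_vector) \<Rightarrow> real \<Rightarrow> ereal" where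
  "rnorm T r = (SUP y \<in> {y. norm y \<le> r}. ereal (norm (T y)))"

end

theory Submission
  imports Defs
begin

text \<open>Write h = t h' with norm h' = r and t = norm h / r \<le> 1. Convexity along the line
  through x - h', x, x + h' traps S (x + h) - S x between - t S_x (- h') and t S_x h'. In a
  Banach lattice two-sided order bounds give norm bounds, so a bound M for S_x on the r-ball
  makes S Lipschitz at x with constant 2 M / r. The converse only needs continuity at x.\<close>

lemma sup_neg_nonneg:
  fixes z :: "'a::banach_lattice"
  shows "0 \<le> sup z (- z)"
proof -
  let ?s = "sup z (- z)"
  have "z + - z \<le> ?s + ?s" by (rule add_mono) auto
  hence "(1/2::real) *\<^sub>R 0 \<le> (1/2::real) *\<^sub>R (?s + ?s)"
    by (intro scaleR_left_mono) simp_all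
  also have "(1/2::real) *\<^sub>R (?s + ?s) = ?s" by (simp flip: scaleR_2)
  finally show ?thesis by simp
qed

lemma sup_neg_eq_self:
  fixes v :: "'a::banach_lattice"
  assumes "0 \<le> v"
  shows "sup v (- v) = v"
  using assms by (meson neg_le_0_iff_le order_trans sup_absorb1)

lemma norm_sup_neg_le:
  fixes a :: "'a::banach_lattice"
  shows "norm (sup a (- a)) \<le> norm a"
  by (rule lattice_norm) (simp add: sup_neg_eq_self[OF sup_neg_nonneg])

lemma norm_le_norm_add_norm_of_bounds:
  fixes a b d :: "'a::banach_lattice"
  assumes lower: "- b \<le> d" and upper: "d \<le> a"
  shows "norm d \<le> norm a + norm b"
proof -
  define u where "u = sup a (- a) + sup b (- b)"
  have "d \<le> u"
    using upper add_mono[OF sup_ge1[of a "- a"] sup_neg_nonneg[of b]]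
    unfolding u_def by simp
  moreover have "- d \<le> u"
  proof -
    have "b \<le> u"
      using add_mono[OF sup_neg_nonneg[of a] sup_ge1[of b "- b"]] unfolding u_def by simp
    thus ?thesis using lower by (meson minus_le_iff order_trans)
  qed
  moreover have "sup u (- u) = u"
    unfolding u_def by (intro sup_neg_eq_self add_nonneg_nonneg sup_neg_nonneg)
  ultimately have "sup d (- d) \<le> sup u (- u)" by simp
  hence "norm d \<le> norm u" by (rule lattice_norm)
  also have "\<dots> \<le> norm a + norm b"
    using norm_triangle_ineq[of "sup a (- a)" "sup b (- b)"] norm_sup_neg_le[of a]
      norm_sup_neg_le[of b]
    unfolding u_def by linarith
  finally show ?thesis .
qed

lemma convex_op_shift_upper:
  assumes "convex_op S" and "0 \<le> t" and "t \<le> 1"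
  shows "shift_op S x (t *\<^sub>R h) \<le> t *\<^sub>R shift_op S x h"
proof -
  have "S (t *\<^sub>R (x + h) + (1 - t) *\<^sub>R x) \<le> t *\<^sub>R S (x + h) + (1 - t) *\<^sub>R S x"
    using assms unfolding convex_op_def by blast
  moreover have "t *\<^sub>R (x + h) + (1 - t) *\<^sub>R x = x + t *\<^sub>R h"
    by (simp add: algebra_simps)
  ultimately show ?thesis
    unfolding shift_op_def by (simp add: algebra_simps le_diff_eq)
qed

lemma convex_op_shift_lower:
  assumes "convex_op S" and t: "0 \<le> t"
  shows "- (t *\<^sub>R shift_op S x (- h)) \<le> shift_op S x (t *\<^sub>R h)"
proof -
  define l where "l = 1 / (1 + t)"
  have "l *\<^sub>R (x + t *\<^sub>R h) + (1 - l) *\<^sub>R (x - h) = x + (l * t - (1 - l)) *\<^sub>R h"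
    by (simp add: algebra_simps)
  also have "l * t - (1 - l) = 0" using t by (simp add: l_def field_simps)
  finally have x: "l *\<^sub>R (x + t *\<^sub>R h) + (1 - l) *\<^sub>R (x - h) = x" by simp
  have "0 \<le> l" "l \<le> 1" using t by (simp_all add: l_def)
  hence "S x \<le> l *\<^sub>R S (x + t *\<^sub>R h) + (1 - l) *\<^sub>R S (x - h)"
    using assms(1) unfolding convex_op_def by (metis x)
  hence "(1 + t) *\<^sub>R S x \<le> (1 + t) *\<^sub>R (l *\<^sub>R S (x + t *\<^sub>R h) + (1 - l) *\<^sub>R S (x - h))"
    using t by (intro scaleR_left_mono) simp_all
  also have "\<dots> = S (x + t *\<^sub>R h) + t *\<^sub>R S (x - h)"
    using t by (simp add: l_def algebra_simps divide_simps)
  finally show ?thesis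
    unfolding shift_op_def by (simp add: algebra_simps le_diff_eq)
qed

lemma convex_op_shift_norm_le:
  fixes S :: "'a::real_normed_vector \<Rightarrow> 'b::banach_lattice"
  assumes S: "convex_op S" and r: "r > 0"
    and bound: "\<And>y. norm y \<le> r \<Longrightarrow> norm (shift_op S x y) \<le> M"
    and h: "norm h \<le> r"
  shows "norm (shift_op S x h) \<le> 2 * M / r * norm h"
proof (cases "h = 0")
  case True
  thus ?thesis by (simp add: shift_op_def)
next
  case False
  define t where "t = norm h / r"
  define h' where "h' = (r / norm h) *\<^sub>R h"
  have t: "0 \<le> t" "t \<le> 1" using h r by (simp_all add: t_def)
  have "h = t *\<^sub>R h'" using False r by (simp add: t_def h'_def)
  moreover have "norm h' = r" using False r by (simp add: h'_def)
  ultimately have "norm (shift_op S x h)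
      \<le> t * norm (shift_op S x h') + t * norm (shift_op S x (- h'))"
    using norm_le_norm_add_norm_of_bounds[OF convex_op_shift_lower[OF S t(1)]
        convex_op_shift_upper[OF S t]] t(1)
    by simp
  also have "\<dots> \<le> t * M + t * M"
    using bound \<open>norm h' = r\<close> t(1) by (intro add_mono mult_left_mono) auto
  finally show ?thesis by (simp add: t_def)
qed

lemma norm_le_rnorm:
  assumes "norm y \<le> r"
  shows "ereal (norm (T y)) \<le> rnorm T r"
  unfolding rnorm_def using assms by (intro SUP_upper) simp

lemma rnorm_less_PInf_iff:
  "rnorm T r < \<infinity> \<longleftrightarrow> (\<exists>M. \<forall>y. norm y \<le> r \<longrightarrow> norm (T y) \<le> M)"
proof
  assume "rnorm T r < \<infinity>"
  hence "rnorm T r \<noteq> \<infinity>" by simp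
  then obtain n :: nat where n: "rnorm T r < ereal (real n)"
    unfolding less_PInf_Ex_of_nat by blast
  have "norm (T y) \<le> real n" if "norm y \<le> r" for y
  proof -
    have "ereal (norm (T y)) < ereal (real n)"
      using norm_le_rnorm[OF that] n by (rule order.strict_trans1)
    thus ?thesis by simp
  qed
  thus "\<exists>M. \<forall>y. norm y \<le> r \<longrightarrow> norm (T y) \<le> M" by blast
next
  assume "\<exists>M. \<forall>y. norm y \<le> r \<longrightarrow> norm (T y) \<le> M"
  then obtain M where M: "\<forall>y. norm y \<le> r \<longrightarrow> norm (T y) \<le> M" by blast
  have "rnorm T r \<le> ereal M" unfolding rnorm_def by (rule SUP_least) (simp add: M)
  thus "rnorm T r < \<infinity>" by (rule order.strict_trans1) simp
qed

lemma isCont_imp_rnorm_shift_finite: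
  assumes "isCont S x"
  shows "\<exists>r>0. rnorm (shift_op S x) r < \<infinity>"
proof -
  obtain d where d: "d > 0" "\<And>x'. dist x' x < d \<Longrightarrow> dist (S x') (S x) < 1"
    using assms unfolding continuous_at_eps_delta by (meson zero_less_one)
  have "norm (shift_op S x y) \<le> 1" if "norm y \<le> d / 2" for y
    using d that[unfolded dist_norm] less_imp_le[OF d(2)[of "x + y"]]
    by (simp add: shift_op_def dist_norm)
  hence "rnorm (shift_op S x) (d / 2) < \<infinity>" unfolding rnorm_less_PInf_iff by blast
  thus ?thesis using d(1) half_gt_zero by blast
qed

lemma convex_op_isCont_of_rnorm_shift_finite:
  fixes S :: "'a::real_normed_vector \<Rightarrow> 'b::banach_lattice"
  assumes S: "convex_op S" and r: "r > 0" and finite: "rnorm (shift_op S x) r < \<infinity>"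
  shows "isCont S x"
proof -
  obtain M where M: "\<And>y. norm y \<le> r \<Longrightarrow> norm (shift_op S x y) \<le> M"
    using finite rnorm_less_PInf_iff by blast
  have "\<forall>\<^sub>F h in at (0::'a). norm h \<le> r"
    using r by (auto simp: eventually_at dist_norm intro!: exI[of _ r])
  hence "\<forall>\<^sub>F h in at 0. norm (shift_op S x h) \<le> 2 * M / r * norm h"
    by (elim eventually_mono) (rule convex_op_shift_norm_le[OF S r M])
  moreover have "((\<lambda>h. 2 * M / r * norm h) \<longlongrightarrow> 0) (at (0::'a))"
    using r by (auto intro!: tendsto_eq_intros)
  ultimately have "(shift_op S x \<longlongrightarrow> 0) (at 0)"
    by (rule Lim_null_comparison)
  thus ?thesis
    unfolding isCont_iff shift_op_def by (simp add: LIM_zero_iff)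
qed

theorem lemmaA2:
  fixes S :: "'a::banach_lattice \<Rightarrow> 'b::banach_lattice"
  assumes "convex_op S"
  shows "continuous_on UNIV S \<longleftrightarrow>
           (\<forall>x. \<exists>r>0. rnorm (shift_op S x) r < \<infinity>)"
proof -
  have "continuous_on UNIV S \<longleftrightarrow> (\<forall>x. isCont S x)"
    by (simp add: continuous_on_eq_continuous_at)
  thus ?thesis
    using isCont_imp_rnorm_shift_finite convex_op_isCont_of_rnorm_shift_finite[OF assms]
    by blast
qed

end
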